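(* Let $\mathcal{K}\subseteq\mathbb{R}^d$, let $f(x)=\mathbb{E}_\xi[f(x;\xi)]$ where for every realisation $\xi$ the function $f(\cdot;\xi):\mathbb{R}^d\to\mathbb{R}$ is differentiable with $\|\nabla f(x;\xi)-\nabla f(y;\xi)\|_2\le L\|x-y\|_2$ for all $x,y$, and $\mathbb{E}_\xi[\nabla f(x;\xi)]=\nabla f(x)$. Assume $\mathbb{E}_\xi[\|\nabla f(x)-\nabla f(x;\xi)\|_2^2]\le\sigma^2$ for all $x\in\mathcal{K}$. Let $\nu>0$, let $u=(u_1,\dots,u_d)$ with $u_1,\dots,u_d$ independent Rademacher random variables (independent of $\xi$), and define \[ g_\nu(x;\xi)=\frac{1}{\nu}\big(f(x+\nu u;\xi)-f(x;\xi)\big)u,\qquad \nabla f_\nu(x)=\mathbb{E}_u\Big[\frac{1}{\nu}\big(f(x+\nu u)-f(x)\big)u\Big]. \] Then for every $x\in\mathcal{K}$, \[ \mathbb{E}\big[\|g_\nu(x;\xi)-\nabla f_\nu(x)\|_\infty^2\big]\le \frac{3\nu^2d^2L^2}{2}+10\|\nabla f(x)\|_2^2+8\sigma^2 . \]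
   Context: A Rademacher random variable takes the values $+1$ and $-1$ with probability $1/2$ each. The expectation $\mathbb{E}$ is over both $u$ and $\xi$. *)

theory Defs
  imports "HOL-Probability.Probability"
begin

definition rad_vecs :: "(real ^ 'd) set" where
  "rad_vecs = {u. \<forall>i. u $ i = 1 \<or> u $ i = -1}"

text \<open>Expectation over u = (u_1,...,u_d) with independent Rademacher entries,
  i.e. the uniform average over the 2^d sign vectors.\<close>
definition rad_expect :: "(real ^ 'd \<Rightarrow> 'v::real_vector) \<Rightarrow> 'v" where
  "rad_expect h = (1 / 2 ^ CARD('d)) *\<^sub>R (\<Sum>u\<in>(rad_vecs :: (real ^ 'd) set). h u)"

definition linf_norm :: "real ^ 'd \<Rightarrow> real" where
  "linf_norm v = Max (range (\<lambda>i. \<bar>v $ i\<bar>))"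

end

(*
  Write X(xi,u) = (f(x + nu u; xi) - f(x; xi)) / nu. The estimator is X u, its mean is E[X u], and its
  i-th coordinate deviation is u_i X - E[u_i X]. In L2 of (xi,u) the coordinates u_i form an
  orthonormal system of functions of modulus one, and for any such system
    E max_i |u_i X - E[u_i X]|^2 <= 17/5 E[X^2].
  This follows by induction on the number of non-zero coefficients E[u_i X]: if m is the largest
  coefficient in modulus and r the L2 norm of X, then either m <= 21/25 r and the pointwise bound
  |X| + m suffices, or removing the component m u_j costs at most m pointwise and lowers r^2 by m^2.
  The Taylor bound for the L-smooth f(.; xi) puts X within L nu d / 2 of grad f(x; xi) . u, and
  E_u (g . u)^2 = |g|^2, whose mean over xi is at most |grad f(x)|^2 + sigma^2.
*)

theory Submission
  imports Defs
begin

section \<open>Maximal deviation in an abstract L2 space\<close>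

text \<open>ip Y Z plays the role of E[Y Z] over a probability space with sample space \<Omega>.\<close>

locale monotone_inner_space =
  fixes V :: "('w \<Rightarrow> real) set" and \<Omega> :: "'w set"
    and ip :: "('w \<Rightarrow> real) \<Rightarrow> ('w \<Rightarrow> real) \<Rightarrow> real"
  assumes V_add: "Y \<in> V \<Longrightarrow> Z \<in> V \<Longrightarrow> (\<lambda>w. Y w + Z w) \<in> V"
    and V_scale: "Y \<in> V \<Longrightarrow> (\<lambda>w. c * Y w) \<in> V"
    and V_const: "(\<lambda>w. c) \<in> V"
    and V_abs: "Y \<in> V \<Longrightarrow> (\<lambda>w. \<bar>Y w\<bar>) \<in> V"
    and ip_add: "Y \<in> V \<Longrightarrow> Z \<in> V \<Longrightarrow> W \<in> V \<Longrightarrow> ip (\<lambda>w. Y w + Z w) W = ip Y W + ip Z W"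
    and ip_scale: "Y \<in> V \<Longrightarrow> W \<in> V \<Longrightarrow> ip (\<lambda>w. c * Y w) W = c * ip Y W"
    and ip_sym: "Y \<in> V \<Longrightarrow> Z \<in> V \<Longrightarrow> ip Y Z = ip Z Y"
    and ip_mono: "Y \<in> V \<Longrightarrow> Z \<in> V \<Longrightarrow> (\<And>w. w \<in> \<Omega> \<Longrightarrow> \<bar>Y w\<bar> \<le> \<bar>Z w\<bar>) \<Longrightarrow> ip Y Y \<le> ip Z Z"
    and ip_one: "ip (\<lambda>w. 1) (\<lambda>w. 1) = 1"
begin

lemma V_add_scale: "Y \<in> V \<Longrightarrow> Z \<in> V \<Longrightarrow> (\<lambda>w. Y w + c * Z w) \<in> V"
  using V_add V_scale by blast

lemma ip_add_right:
  assumes "Y \<in> V" "Z \<in> V" "W \<in> V"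
  shows "ip W (\<lambda>w. Y w + Z w) = ip W Y + ip W Z"
  using ip_add[OF assms] ip_sym[OF assms(1,3)] ip_sym[OF assms(2,3)] ip_sym[OF assms(3) V_add[OF assms(1,2)]]
  by simp

lemma ip_scale_right:
  assumes "Y \<in> V" "W \<in> V"
  shows "ip W (\<lambda>w. c * Y w) = c * ip W Y"
  using ip_scale[OF assms] ip_sym[OF assms] ip_sym[OF assms(2) V_scale[OF assms(1)]] by simp

lemma ip_nonneg:
  assumes "Y \<in> V"
  shows "0 \<le> ip Y Y"
proof -
  have "ip (\<lambda>w. 0 * 0) (\<lambda>w. 0) = 0 * ip (\<lambda>w. 0) (\<lambda>w. 0)"
    by (rule ip_scale[OF V_const V_const])
  then have "ip (\<lambda>w. 0) (\<lambda>w. 0) = 0"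
    by simp
  moreover have "ip (\<lambda>w. 0) (\<lambda>w. 0) \<le> ip Y Y"
    by (rule ip_mono[OF V_const assms]) simp
  ultimately show ?thesis
    by simp
qed

lemma ip_add_scale_self:
  assumes "Y \<in> V" "Z \<in> V"
  shows "ip (\<lambda>w. Y w + c * Z w) (\<lambda>w. Y w + c * Z w) = ip Y Y + 2 * c * ip Y Z + c\<^sup>2 * ip Z Z"
  using assms V_scale V_add_scale
  by (simp add: ip_add ip_scale ip_add_right ip_scale_right ip_sym[of Z Y] power2_eq_square algebra_simps)

lemma quadratic_nonneg_discriminant:
  fixes A B C :: real
  assumes "0 \<le> C" and nonneg: "\<And>c. 0 \<le> A + 2 * c * B + c\<^sup>2 * C"
  shows "B\<^sup>2 \<le> A * C"
proof (cases "C = 0")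
  case True
  have "B = 0"
  proof (rule ccontr)
    assume "B \<noteq> 0"
    have "0 \<le> A + 2 * (- (\<bar>A\<bar> + 1) / (2 * B)) * B" 
      using nonneg[of "- (\<bar>A\<bar> + 1) / (2 * B)"] True by simp
    also have "\<dots> = A - (\<bar>A\<bar> + 1)"
      using \<open>B \<noteq> 0\<close> by (simp add: field_simps)
    finally show False
      by linarith
  qed
  then show ?thesis
    using True by simp
next
  case False
  with \<open>0 \<le> C\<close> have "0 < C"
    by simp
  have "0 \<le> A + 2 * (- B / C) * B + (- B / C)\<^sup>2 * C"
    by (rule nonneg)
  also have "\<dots> = A - B\<^sup>2 / C"
    using \<open>0 < C\<close> by (simp add: field_simps power2_eq_square)
  finally show ?thesis
    using \<open>0 < C\<close> by (simp add: field_simps)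
qed

lemma ip_Cauchy_Schwarz:
  assumes "Y \<in> V" "Z \<in> V"
  shows "(ip Y Z)\<^sup>2 \<le> ip Y Y * ip Z Z"
proof (rule quadratic_nonneg_discriminant)
  show "0 \<le> ip Z Z"
    using ip_nonneg assms(2) .
  show "0 \<le> ip Y Y + 2 * c * ip Y Z + c\<^sup>2 * ip Z Z" for c
    using ip_nonneg[OF V_add_scale[OF assms]] ip_add_scale_self[OF assms] by simp
qed

definition nrm :: "('w \<Rightarrow> real) \<Rightarrow> real" where
  "nrm Y = sqrt (ip Y Y)"

lemma nrm_nonneg: "Y \<in> V \<Longrightarrow> 0 \<le> nrm Y"
  unfolding nrm_def using ip_nonneg by simp

lemma nrm_sq: "Y \<in> V \<Longrightarrow> (nrm Y)\<^sup>2 = ip Y Y"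
  unfolding nrm_def using ip_nonneg by simp

lemma nrm_mono: "Y \<in> V \<Longrightarrow> Z \<in> V \<Longrightarrow> (\<And>w. w \<in> \<Omega> \<Longrightarrow> \<bar>Y w\<bar> \<le> \<bar>Z w\<bar>) \<Longrightarrow> nrm Y \<le> nrm Z"
  unfolding nrm_def using ip_mono by simp

lemma nrm_triangle:
  assumes "Y \<in> V" "Z \<in> V"
  shows "nrm (\<lambda>w. Y w + Z w) \<le> nrm Y + nrm Z"
proof -
  have "(ip Y Z)\<^sup>2 \<le> (nrm Y * nrm Z)\<^sup>2"
    using ip_Cauchy_Schwarz[OF assms] by (simp add: power_mult_distrib nrm_sq assms)
  then have "ip Y Z \<le> nrm Y * nrm Z"
    using nrm_nonneg assms by (simp add: power2_le_iff_abs_le)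
  then have "ip (\<lambda>w. Y w + Z w) (\<lambda>w. Y w + Z w) \<le> (nrm Y + nrm Z)\<^sup>2"
    using ip_add_scale_self[OF assms, of 1] by (simp add: power2_sum nrm_sq assms)
  then have "nrm (\<lambda>w. Y w + Z w) \<le> sqrt ((nrm Y + nrm Z)\<^sup>2)"
    unfolding nrm_def[of "\<lambda>w. Y w + Z w"] by (rule real_sqrt_le_mono)
  then show ?thesis
    using nrm_nonneg assms by simp
qed

lemma nrm_const: "nrm (\<lambda>w. c) = \<bar>c\<bar>"
proof -
  have "ip (\<lambda>w. c * 1) (\<lambda>w. c * 1) = c * (c * ip (\<lambda>w. 1) (\<lambda>w. 1))"
    using V_const by (simp only: ip_scale ip_scale_right)
  then show ?thesis
    unfolding nrm_def by (simp add: ip_one)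
qed

lemma nrm_abs: "Y \<in> V \<Longrightarrow> nrm (\<lambda>w. \<bar>Y w\<bar>) = nrm Y"
  using nrm_mono[of Y "\<lambda>w. \<bar>Y w\<bar>"] nrm_mono[of "\<lambda>w. \<bar>Y w\<bar>" Y] V_abs by fastforce

lemma V_Max:
  assumes "finite A" "A \<noteq> {}" "\<And>i. i \<in> A \<Longrightarrow> F i \<in> V"
  shows "(\<lambda>w. MAX i\<in>A. F i w) \<in> V"
  using assms
proof (induction A rule: finite_ne_induct)
  case (singleton i)
  then show ?case
    by simp
next
  case (insert i A)
  have "(\<lambda>w. max (F i w) (MAX k\<in>A. F k w)) = (\<lambda>w. (1/2) * (F i w + (MAX k\<in>A. F k w))
      + (1/2) * \<bar>F i w + (-1) * (MAX k\<in>A. F k w)\<bar>)"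
    by (rule ext) (simp add: max_def abs_if field_simps)
  moreover have "\<dots> \<in> V"
    using insert by (intro V_add V_scale V_abs V_add_scale) auto
  ultimately show ?case
    using insert by simp
qed

end

lemma power2_add_le_of_dominant_part:
  fixes m r s :: real
  assumes "21/25 * r \<le> m" "m \<le> r" "0 \<le> s" "s\<^sup>2 \<le> 17/5 * (r\<^sup>2 - m\<^sup>2)"
  shows "(m + s)\<^sup>2 \<le> 17/5 * r\<^sup>2"
proof -
  have "r\<^sup>2 \<le> (25/21 * m)\<^sup>2"
    using assms by (intro power_mono) auto
  then have "r\<^sup>2 \<le> 625/441 * m\<^sup>2"
    by (simp add: power_mult_distrib power_divide)
  then have "s\<^sup>2 \<le> 36/25 * m\<^sup>2"
    using assms(4) zero_le_power2[of m] unfolding right_diff_distrib by linarith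
  then have "s\<^sup>2 \<le> (6/5 * m)\<^sup>2"
    by (simp add: power_mult_distrib power_divide)
  then have "s \<le> 6/5 * m"
    using assms by (simp add: power2_le_iff_abs_le)
  moreover have "0 \<le> m"
    using assms(1,2) by linarith
  ultimately have "m * s \<le> m * (6/5 * m)"
    by (rule mult_left_mono)
  then have "2 * m * s \<le> 12/5 * m\<^sup>2"
    by (simp add: power2_eq_square)
  then show ?thesis
    using assms(4) by (simp add: power2_sum)
qed

definition max_deviation ::
    "(('w \<Rightarrow> real) \<Rightarrow> ('w \<Rightarrow> real) \<Rightarrow> real) \<Rightarrow> ('i \<Rightarrow> 'w \<Rightarrow> real) \<Rightarrow> 'i set \<Rightarrow>
      ('w \<Rightarrow> real) \<Rightarrow> 'w \<Rightarrow> real"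
  where "max_deviation ip U I X w = (MAX i\<in>I. \<bar>U i w * X w - ip (U i) X\<bar>)"

locale unimodular_orthonormal_system = monotone_inner_space V \<Omega> ip
  for V :: "('w \<Rightarrow> real) set" and \<Omega> and ip +
  fixes U :: "'i \<Rightarrow> 'w \<Rightarrow> real" and I :: "'i set"
  assumes finite_I: "finite I" and I_nonempty: "I \<noteq> {}"
    and U_mem: "i \<in> I \<Longrightarrow> U i \<in> V"
    and U_mult_mem: "i \<in> I \<Longrightarrow> Y \<in> V \<Longrightarrow> (\<lambda>w. U i w * Y w) \<in> V"
    and abs_U: "i \<in> I \<Longrightarrow> w \<in> \<Omega> \<Longrightarrow> \<bar>U i w\<bar> = 1"
    and ip_U_U: "i \<in> I \<Longrightarrow> k \<in> I \<Longrightarrow> ip (U i) (U k) = (if i = k then 1 else 0)"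
begin

abbreviation dev :: "('w \<Rightarrow> real) \<Rightarrow> 'w \<Rightarrow> real" where
  "dev \<equiv> max_deviation ip U I"

lemma dev_mem:
  assumes "X \<in> V"
  shows "dev X \<in> V"
proof -
  have "(\<lambda>w. \<bar>U i w * X w + (- ip (U i) X) * 1\<bar>) \<in> V" if "i \<in> I" for i
    using that assms by (intro V_abs V_add_scale U_mult_mem V_const)
  then show ?thesis
    unfolding max_deviation_def[abs_def] using finite_I I_nonempty by (intro V_Max) auto
qed

lemma dev_ge: "i \<in> I \<Longrightarrow> \<bar>U i w * X w - ip (U i) X\<bar> \<le> dev X w"
  unfolding max_deviation_def using finite_I by (intro Max_ge) auto

lemma dev_le: "(\<And>i. i \<in> I \<Longrightarrow> \<bar>U i w * X w - ip (U i) X\<bar> \<le> c) \<Longrightarrow> dev X w \<le> c"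
  unfolding max_deviation_def using finite_I I_nonempty by simp

lemma dev_nonneg: "0 \<le> dev X w"
  using I_nonempty dev_ge by (meson abs_ge_zero all_not_in_conv order_trans)

lemma dev_le_abs_add:
  assumes "w \<in> \<Omega>" "\<And>i. i \<in> I \<Longrightarrow> \<bar>ip (U i) X\<bar> \<le> m"
  shows "dev X w \<le> \<bar>X w\<bar> + m"
proof (rule dev_le)
  fix i assume "i \<in> I"
  have "\<bar>U i w * X w - ip (U i) X\<bar> \<le> \<bar>U i w * X w\<bar> + \<bar>ip (U i) X\<bar>"
    by (rule abs_triangle_ineq4)
  also have "\<dots> \<le> \<bar>X w\<bar> + m"
    using abs_U[OF \<open>i \<in> I\<close> assms(1)] assms(2)[OF \<open>i \<in> I\<close>] by (simp add: abs_mult)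
  finally show "\<bar>U i w * X w - ip (U i) X\<bar> \<le> \<bar>X w\<bar> + m" .
qed

lemma ip_U_add_scale_U:
  assumes "i \<in> I" "j \<in> I" "X \<in> V"
  shows "ip (U i) (\<lambda>w. X w + c * U j w) = ip (U i) X + (if i = j then c else 0)"
  using assms U_mem V_scale by (simp add: ip_add_right ip_scale_right ip_U_U)

lemma dev_le_peel:
  assumes "j \<in> I" "X \<in> V" "w \<in> \<Omega>"
  shows "dev X w \<le> \<bar>ip (U j) X\<bar> + dev (\<lambda>w. X w - ip (U j) X * U j w) w"
    (is "_ \<le> \<bar>?\<mu>\<bar> + dev ?Z w")
proof (rule dev_le)
  fix i assume "i \<in> I"
  have "U j w * U j w = 1"
    using abs_U[OF assms(1,3)] abs_mult_self_eq[of "U j w"] by simp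
  then have "\<bar>U i w * U j w - (if i = j then 1 else 0)\<bar> \<le> 1"
    using abs_U[OF \<open>i \<in> I\<close> assms(3)] abs_U[OF assms(1,3)] by (auto simp: abs_mult)
  then have "\<bar>?\<mu> * (U i w * U j w - (if i = j then 1 else 0))\<bar> \<le> \<bar>?\<mu>\<bar>"
    by (simp add: abs_mult mult_left_le)
  moreover have "U i w * X w - ip (U i) X
      = (U i w * ?Z w - ip (U i) ?Z) + ?\<mu> * (U i w * U j w - (if i = j then 1 else 0))"
    using ip_U_add_scale_U[OF \<open>i \<in> I\<close> assms(1,2), of "- ?\<mu>"] by (auto simp: algebra_simps)
  ultimately show "\<bar>U i w * X w - ip (U i) X\<bar> \<le> \<bar>?\<mu>\<bar> + dev ?Z w"
    using dev_ge[OF \<open>i \<in> I\<close>, of w ?Z] by linarith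
qed

lemma nrm_dev_le_add:
  assumes "X \<in> V" "0 \<le> m" "\<And>i. i \<in> I \<Longrightarrow> \<bar>ip (U i) X\<bar> \<le> m"
  shows "nrm (dev X) \<le> nrm X + m"
proof -
  have "nrm (dev X) \<le> nrm (\<lambda>w. \<bar>X w\<bar> + m)"
    using assms dev_le_abs_add[of _ X m] dev_nonneg[of X]
    by (intro nrm_mono dev_mem V_add V_abs V_const) auto
  also have "\<dots> \<le> nrm X + m"
    using nrm_triangle[OF V_abs[OF assms(1)] V_const[of m]] nrm_abs[OF assms(1)] nrm_const assms(2)
    by simp
  finally show ?thesis .
qed

lemma nrm_dev_le_peel:
  assumes "j \<in> I" "X \<in> V"
  shows "nrm (dev X) \<le> \<bar>ip (U j) X\<bar> + nrm (dev (\<lambda>w. X w - ip (U j) X * U j w))"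
    (is "_ \<le> \<bar>?\<mu>\<bar> + nrm (dev ?Z)")
proof -
  have "?Z \<in> V"
    using V_add_scale[OF assms(2) U_mem[OF assms(1)], of "- ?\<mu>"] by simp
  then have "nrm (dev X) \<le> nrm (\<lambda>w. \<bar>?\<mu>\<bar> + dev ?Z w)"
    using assms dev_le_peel[OF assms] dev_nonneg[of X] dev_nonneg[of ?Z]
    by (intro nrm_mono dev_mem V_add V_const) auto
  also have "\<dots> \<le> \<bar>?\<mu>\<bar> + nrm (dev ?Z)"
    using nrm_triangle[OF V_const[of "\<bar>?\<mu>\<bar>"] dev_mem[OF \<open>?Z \<in> V\<close>]] nrm_const by simp
  finally show ?thesis .
qed

lemma ip_remove_component:
  assumes "j \<in> I" "X \<in> V"
  shows "ip (\<lambda>w. X w - ip (U j) X * U j w) (\<lambda>w. X w - ip (U j) X * U j w)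
      = ip X X - (ip (U j) X)\<^sup>2"
  using ip_add_scale_self[OF assms(2) U_mem[OF assms(1)], of "- ip (U j) X"] ip_sym[OF assms(2) U_mem[OF assms(1)]]
    ip_U_U[OF assms(1,1)] by (simp add: power2_eq_square)

lemma support_remove_component:
  assumes "j \<in> I" "X \<in> V"
  shows "{i \<in> I. ip (U i) (\<lambda>w. X w - ip (U j) X * U j w) \<noteq> 0} = {i \<in> I. ip (U i) X \<noteq> 0} - {j}"
  using ip_U_add_scale_U[OF _ assms(1,2), of _ "- ip (U j) X"] by (auto split: if_splits)

theorem ip_dev_le:
  assumes "X \<in> V"
  shows "ip (dev X) (dev X) \<le> 17/5 * ip X X"
  using assms
proof (induction "card {i \<in> I. ip (U i) X \<noteq> 0}" arbitrary: X rule: less_induct)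
  case less
  obtain j where "j \<in> I" and j_max: "\<And>i. i \<in> I \<Longrightarrow> \<bar>ip (U i) X\<bar> \<le> \<bar>ip (U j) X\<bar>"
    using ex_min_if_finite[of "(\<lambda>i. - \<bar>ip (U i) X\<bar>) ` I"] finite_I I_nonempty by fastforce
  define Z where "Z = (\<lambda>w. X w - ip (U j) X * U j w)"
  define r where "r = nrm X"
  define m where "m = \<bar>ip (U j) X\<bar>"
  have "Z \<in> V"
    unfolding Z_def using V_add_scale[OF less.prems U_mem[OF \<open>j \<in> I\<close>], of "- ip (U j) X"] by simp
  have "0 \<le> r" "0 \<le> m"
    unfolding r_def m_def using nrm_nonneg less.prems by auto
  have ip_Z: "ip Z Z = r\<^sup>2 - m\<^sup>2"
    unfolding Z_def r_def m_def using ip_remove_component[OF \<open>j \<in> I\<close> less.prems] nrm_sq[OF less.prems]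
    by simp
  then have "m \<le> r"
    using ip_nonneg[OF \<open>Z \<in> V\<close>] \<open>0 \<le> r\<close> \<open>0 \<le> m\<close> by (simp add: power2_le_iff_abs_le)
  have "(nrm (dev X))\<^sup>2 \<le> 17/5 * r\<^sup>2"
  \<comment> \<open>(46/25)^2 < 17/5, and above the threshold removing the U j component pays off\<close>
  proof (cases "m \<le> 21/25 * r")
    case True
    have "nrm (dev X) \<le> 46/25 * r"
      using nrm_dev_le_add[OF less.prems \<open>0 \<le> m\<close>] j_max True unfolding r_def m_def by fastforce
    then have "(nrm (dev X))\<^sup>2 \<le> (46/25 * r)\<^sup>2"
      using nrm_nonneg dev_mem less.prems by (intro power_mono) auto
    moreover have "(46/25 * r)\<^sup>2 = 2116/625 * r\<^sup>2"
      by (simp add: power_mult_distrib power_divide)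
    ultimately show ?thesis
      using zero_le_power2[of r] by linarith
  next
    case False
    then have "ip (U j) X \<noteq> 0"
      using \<open>0 \<le> r\<close> unfolding m_def by auto
    then have "card {i \<in> I. ip (U i) Z \<noteq> 0} < card {i \<in> I. ip (U i) X \<noteq> 0}"
      unfolding Z_def support_remove_component[OF \<open>j \<in> I\<close> less.prems] using finite_I \<open>j \<in> I\<close>
      by (intro card_Diff1_less) auto
    from less.hyps[OF this \<open>Z \<in> V\<close>]
    have "(nrm (dev Z))\<^sup>2 \<le> 17/5 * (r\<^sup>2 - m\<^sup>2)"
      using nrm_sq dev_mem \<open>Z \<in> V\<close> ip_Z by simp
    then have "(m + nrm (dev Z))\<^sup>2 \<le> 17/5 * r\<^sup>2"
      using False \<open>m \<le> r\<close> nrm_nonneg dev_mem \<open>Z \<in> V\<close> by (intro power2_add_le_of_dominant_part) auto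
    moreover have "(nrm (dev X))\<^sup>2 \<le> (m + nrm (dev Z))\<^sup>2"
      using nrm_dev_le_peel[OF \<open>j \<in> I\<close> less.prems] nrm_nonneg dev_mem less.prems
      unfolding Z_def m_def by (intro power_mono) auto
    ultimately show ?thesis
      by linarith
  qed
  then show ?case
    unfolding r_def using nrm_sq dev_mem less.prems by simp
qed

end

section \<open>Rademacher averages\<close>

lemma rad_vecs_eq_image_PiE: "rad_vecs = vec_lambda ` (PiE UNIV (\<lambda>_. {1, -1}))"
proof (intro equalityI subsetI)
  fix u :: "real ^ 'd"
  assume "u \<in> rad_vecs"
  then have "vec_nth u \<in> PiE UNIV (\<lambda>_. {1, -1})"
    by (auto simp: rad_vecs_def)
  then show "u \<in> vec_lambda ` PiE UNIV (\<lambda>_. {1, -1})"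
    by (metis image_eqI vec_nth_inverse)
qed (auto simp: rad_vecs_def PiE_iff)

lemma card_rad_vecs: "card (rad_vecs :: (real ^ 'd) set) = 2 ^ CARD('d)"
proof -
  have "inj_on (vec_lambda :: ('d \<Rightarrow> real) \<Rightarrow> real ^ 'd) A" for A
    by (rule inj_onI) (simp add: vec_lambda_inject)
  then show ?thesis
    unfolding rad_vecs_eq_image_PiE by (simp add: card_image card_PiE numeral_2_eq_2)
qed

lemma rad_vec_nth_cases: "u \<in> rad_vecs \<Longrightarrow> u $ i = 1 \<or> u $ i = -1"
  unfolding rad_vecs_def by simp

lemma rad_vec_nth_mult_self: "u \<in> rad_vecs \<Longrightarrow> u $ i * u $ i = 1"
  using rad_vec_nth_cases[of u i] by auto

lemma power2_rad_vec_nth: "u \<in> rad_vecs \<Longrightarrow> (u $ i)\<^sup>2 = 1"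
  using rad_vec_nth_cases[of u i] by auto

lemma abs_rad_vec_nth: "u \<in> rad_vecs \<Longrightarrow> \<bar>u $ i\<bar> = 1"
  using rad_vec_nth_cases[of u i] by auto

lemma norm_rad_vec_sq: "u \<in> rad_vecs \<Longrightarrow> (norm (u :: real ^ 'd))\<^sup>2 = real CARD('d)"
  by (simp add: power2_norm_eq_inner inner_vec_def rad_vec_nth_mult_self)

lemma rad_expect_eq_average: "rad_expect (h :: real ^ 'd \<Rightarrow> real) = (\<Sum>u\<in>rad_vecs. h u) / 2 ^ CARD('d)"
  unfolding rad_expect_def by simp

lemma rad_expect_nth: "rad_expect (h :: real ^ 'd \<Rightarrow> real ^ 'e) $ i = rad_expect (\<lambda>u. h u $ i)"
  unfolding rad_expect_def by simp

lemma rad_expect_add: "rad_expect (\<lambda>u. f u + g u :: real) = rad_expect f + rad_expect g"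
  unfolding rad_expect_eq_average by (simp add: sum.distrib add_divide_distrib)

lemma rad_expect_cmult: "rad_expect (\<lambda>u. c * f u :: real) = c * rad_expect f"
  unfolding rad_expect_eq_average by (simp add: sum_distrib_left)

lemma rad_expect_const: "rad_expect (\<lambda>u :: real ^ 'd. c :: real) = c"
  unfolding rad_expect_eq_average by (simp add: card_rad_vecs)

lemma rad_expect_sum: "finite A \<Longrightarrow> rad_expect (\<lambda>u. \<Sum>i\<in>A. f i u :: real) = (\<Sum>i\<in>A. rad_expect (f i))"
  by (induction A rule: finite_induct) (simp_all add: rad_expect_add rad_expect_const)

lemma rad_expect_cong:
  "(\<And>u. u \<in> rad_vecs \<Longrightarrow> f u = g u) \<Longrightarrow> rad_expect (f :: real ^ 'd \<Rightarrow> real) = rad_expect g"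
  unfolding rad_expect_eq_average by (simp cong: sum.cong)

lemma rad_expect_mono:
  "(\<And>u. u \<in> rad_vecs \<Longrightarrow> f u \<le> g u) \<Longrightarrow> rad_expect (f :: real ^ 'd \<Rightarrow> real) \<le> rad_expect g"
  unfolding rad_expect_eq_average by (intro divide_right_mono sum_mono) auto

lemma rad_expect_nonneg: "(\<And>u. u \<in> rad_vecs \<Longrightarrow> 0 \<le> f u) \<Longrightarrow> 0 \<le> rad_expect (f :: real ^ 'd \<Rightarrow> real)"
  using rad_expect_mono[of "\<lambda>_. 0" f] by (simp add: rad_expect_const)

definition flip_coord :: "'d \<Rightarrow> real ^ 'd \<Rightarrow> real ^ 'd" where
  "flip_coord k u = (\<chi> i. if i = k then - u $ i else u $ i)"

lemma rad_expect_nth_mult_nth: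
  "rad_expect (\<lambda>u :: real ^ 'd. u $ i * u $ k) = (if i = k then 1 else 0)"
proof (cases "i = k")
  case True
  then show ?thesis
    using rad_expect_cong[of "\<lambda>u. u $ i * u $ k" "\<lambda>_. 1"] by (simp add: rad_vec_nth_mult_self rad_expect_const)
next
  case False
  have "(\<Sum>u\<in>rad_vecs. u $ i * u $ k) = (\<Sum>u\<in>rad_vecs. flip_coord k u $ i * flip_coord k u $ k)"
    by (rule sum.reindex_bij_witness[where i = "flip_coord k" and j = "flip_coord k"])
      (auto simp: flip_coord_def rad_vecs_def vec_eq_iff)
  also have "\<dots> = - (\<Sum>u\<in>rad_vecs. u $ i * u $ k)"
    using False by (simp add: flip_coord_def sum_negf[symmetric])
  finally show ?thesis
    using False unfolding rad_expect_eq_average by simp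
qed

lemma rad_expect_inner_sq: "rad_expect (\<lambda>u :: real ^ 'd. (a \<bullet> u)\<^sup>2) = (norm a)\<^sup>2"
proof -
  have "rad_expect (\<lambda>u :: real ^ 'd. (a \<bullet> u)\<^sup>2)
      = rad_expect (\<lambda>u. \<Sum>i\<in>UNIV. \<Sum>k\<in>UNIV. (a $ i * a $ k) * (u $ i * u $ k))"
    by (intro rad_expect_cong) (simp add: inner_vec_def power2_eq_square sum_product algebra_simps)
  also have "\<dots> = (\<Sum>i\<in>UNIV. \<Sum>k\<in>UNIV. (a $ i * a $ k) * (if i = k then 1 else 0))"
    by (simp add: rad_expect_sum rad_expect_cmult rad_expect_nth_mult_nth)
  also have "\<dots> = (norm a)\<^sup>2"
    by (simp add: if_distrib power2_norm_eq_inner inner_vec_def cong: if_cong)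
  finally show ?thesis .
qed

section \<open>Functions with Lipschitz gradient\<close>

lemma has_real_derivative_along_line:
  fixes g :: "'a::real_inner \<Rightarrow> real"
  assumes "\<And>z. GDERIV g z :> G z"
  shows "((\<lambda>t. g (y + t *\<^sub>R v)) has_real_derivative (G (y + t *\<^sub>R v) \<bullet> v)) (at t)"
proof -
  have "((\<lambda>t. y + t *\<^sub>R v) has_derivative (\<lambda>h. h *\<^sub>R v)) (at t)"
    by (auto intro!: derivative_eq_intros)
  from has_derivative_compose[OF this assms[unfolded gderiv_def]]
  have "((\<lambda>t. g (y + t *\<^sub>R v)) has_derivative (\<lambda>h. (h *\<^sub>R v) \<bullet> G (y + t *\<^sub>R v))) (at t)" .
  moreover have "(\<lambda>h. (h *\<^sub>R v) \<bullet> G (y + t *\<^sub>R v)) = (*) (G (y + t *\<^sub>R v) \<bullet> v)"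
    by (rule ext) (simp add: inner_commute)
  ultimately show ?thesis
    by (simp add: has_field_derivative_def)
qed

lemma lipschitz_gradient_taylor_bound:
  fixes g :: "'a::real_inner \<Rightarrow> real"
  assumes deriv: "\<And>z. GDERIV g z :> G z" and lip: "\<And>y z. norm (G y - G z) \<le> L * norm (y - z)"
  shows "\<bar>g (y + v) - g y - G y \<bullet> v\<bar> \<le> L / 2 * (norm v)\<^sup>2"
proof -
  define c where "c = G y \<bullet> v"
  define n where "n = (norm v)\<^sup>2"
  have slope: "\<bar>G (y + t *\<^sub>R v) \<bullet> v - c\<bar> \<le> L * t * n" if "0 \<le> t" for t
  proof -
    have "\<bar>G (y + t *\<^sub>R v) \<bullet> v - c\<bar> = \<bar>(G (y + t *\<^sub>R v) - G y) \<bullet> v\<bar>"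
      unfolding c_def by (simp add: inner_diff_left)
    also have "\<dots> \<le> norm (G (y + t *\<^sub>R v) - G y) * norm v"
      by (rule Cauchy_Schwarz_ineq2)
    also have "\<dots> \<le> L * norm (t *\<^sub>R v) * norm v"
      using lip[of "y + t *\<^sub>R v" y] by (intro mult_right_mono) auto
    also have "\<dots> = L * t * n"
      using that unfolding n_def by (simp add: power2_eq_square)
    finally show ?thesis .
  qed
  define lower where "lower t = g (y + t *\<^sub>R v) - t * c - L / 2 * t\<^sup>2 * n" for t
  define upper where "upper t = g (y + t *\<^sub>R v) - t * c + L / 2 * t\<^sup>2 * n" for t
  have "lower 1 \<le> lower 0"
  proof (rule DERIV_nonpos_imp_nonincreasing[of 0 1])
    fix t :: real assume "0 \<le> t" "t \<le> 1"
    have "(lower has_real_derivative (G (y + t *\<^sub>R v) \<bullet> v - c - L * t * n)) (at t)"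
      unfolding lower_def by (rule derivative_eq_intros has_real_derivative_along_line[OF deriv] | simp)+
    then show "\<exists>y. (lower has_real_derivative y) (at t) \<and> y \<le> 0"
      using slope[OF \<open>0 \<le> t\<close>] by (intro exI[of _ "G (y + t *\<^sub>R v) \<bullet> v - c - L * t * n"]) auto
  qed simp
  moreover have "upper 0 \<le> upper 1"
  proof (rule DERIV_nonneg_imp_nondecreasing[of 0 1])
    fix t :: real assume "0 \<le> t" "t \<le> 1"
    have "(upper has_real_derivative (G (y + t *\<^sub>R v) \<bullet> v - c + L * t * n)) (at t)"
      unfolding upper_def by (rule derivative_eq_intros has_real_derivative_along_line[OF deriv] | simp)+
    then show "\<exists>y. (upper has_real_derivative y) (at t) \<and> 0 \<le> y"
      using slope[OF \<open>0 \<le> t\<close>] by (intro exI[of _ "G (y + t *\<^sub>R v) \<bullet> v - c + L * t * n"]) auto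
  qed simp
  ultimately have "- (L / 2 * n) \<le> g (y + v) - g y - c" "g (y + v) - g y - c \<le> L / 2 * n"
    unfolding lower_def upper_def by simp_all
  then show ?thesis
    unfolding c_def[symmetric] n_def[symmetric] by (subst abs_le_iff) linarith
qed

text \<open>The expectation over the signs is the finite average rad_expect, so no product measure is
  needed.\<close>

definition rad_L2 :: "'b measure \<Rightarrow> ('b \<times> (real ^ 'd) \<Rightarrow> real) set" where
  "rad_L2 M = {Y. \<forall>u\<in>rad_vecs. (\<lambda>\<xi>. Y (\<xi>, u)) \<in> borel_measurable M \<and> integrable M (\<lambda>\<xi>. (Y (\<xi>, u))\<^sup>2)}"

definition rad_inner :: "'b measure \<Rightarrow> ('b \<times> (real ^ 'd) \<Rightarrow> real) \<Rightarrow> ('b \<times> (real ^ 'd) \<Rightarrow> real) \<Rightarrow> real"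
  where "rad_inner M Y Z = rad_expect (\<lambda>u. \<integral>\<xi>. Y (\<xi>, u) * Z (\<xi>, u) \<partial>M)"

lemma integrable_abs_bound:
  fixes F G :: "'a \<Rightarrow> real"
  assumes "integrable M F" "G \<in> borel_measurable M" "\<And>\<xi>. \<xi> \<in> space M \<Longrightarrow> \<bar>G \<xi>\<bar> \<le> F \<xi>"
  shows "integrable M G"
  using assms(3) by (intro Bochner_Integration.integrable_bound[OF assms(1,2)] AE_I2) (force intro: order_trans[OF _ abs_ge_self])

lemma rad_L2D:
  assumes "Y \<in> rad_L2 M" "u \<in> rad_vecs"
  shows "(\<lambda>\<xi>. Y (\<xi>, u)) \<in> borel_measurable M" "integrable M (\<lambda>\<xi>. (Y (\<xi>, u))\<^sup>2)"
  using assms unfolding rad_L2_def by auto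

lemma rad_L2I:
  assumes "\<And>u. u \<in> rad_vecs \<Longrightarrow> (\<lambda>\<xi>. Y (\<xi>, u)) \<in> borel_measurable M"
    and "\<And>u. u \<in> rad_vecs \<Longrightarrow> integrable M (F u)"
    and "\<And>\<xi> u. \<xi> \<in> space M \<Longrightarrow> u \<in> rad_vecs \<Longrightarrow> (Y (\<xi>, u))\<^sup>2 \<le> F u \<xi>"
  shows "Y \<in> rad_L2 M"
proof -
  have "integrable M (\<lambda>\<xi>. (Y (\<xi>, u))\<^sup>2)" if "u \<in> rad_vecs" for u
    using assms(3) that
    by (intro integrable_abs_bound[OF assms(2)[OF that]] borel_measurable_power assms(1)) auto
  then show ?thesis
    unfolding rad_L2_def using assms(1) by blast
qed

lemma integrable_rad_L2_mult:
  assumes "Y \<in> rad_L2 M" "Z \<in> rad_L2 M" "u \<in> rad_vecs"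
  shows "integrable M (\<lambda>\<xi>. Y (\<xi>, u) * Z (\<xi>, u))"
proof (rule integrable_abs_bound)
  show "integrable M (\<lambda>\<xi>. (Y (\<xi>, u))\<^sup>2 + (Z (\<xi>, u))\<^sup>2)"
    using rad_L2D[OF assms(1,3)] rad_L2D[OF assms(2,3)] by simp
  show "(\<lambda>\<xi>. Y (\<xi>, u) * Z (\<xi>, u)) \<in> borel_measurable M"
    using rad_L2D[OF assms(1,3)] rad_L2D[OF assms(2,3)] by simp
  show "\<bar>Y (\<xi>, u) * Z (\<xi>, u)\<bar> \<le> (Y (\<xi>, u))\<^sup>2 + (Z (\<xi>, u))\<^sup>2" for \<xi>
    using sum_squares_bound[of "\<bar>Y (\<xi>, u)\<bar>" "\<bar>Z (\<xi>, u)\<bar>"]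
      mult_nonneg_nonneg[OF abs_ge_zero abs_ge_zero, of "Y (\<xi>, u)" "Z (\<xi>, u)"]
    unfolding abs_mult power2_abs by linarith
qed

lemma unimodular_orthonormal_system_rad_L2:
  fixes M :: "'b measure"
  assumes "prob_space M"
  shows "unimodular_orthonormal_system (rad_L2 M) (space M \<times> rad_vecs) (rad_inner M)
      (\<lambda>i w. snd w $ i) (UNIV :: 'd::finite set)"
proof
  interpret prob_space M
    by (rule assms)
  fix Y Z W :: "'b \<times> (real ^ 'd) \<Rightarrow> real" and c :: real and i k :: 'd
  show "(\<lambda>w. c) \<in> rad_L2 M"
    by (rule rad_L2I[where F = "\<lambda>_ _. c\<^sup>2"]) auto
  show "rad_inner M (\<lambda>w. 1) (\<lambda>w. 1) = 1"
    unfolding rad_inner_def by (simp add: rad_expect_const prob_space)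
  show "rad_inner M Y Z = rad_inner M Z Y"
    unfolding rad_inner_def by (simp add: mult.commute)
  show "rad_inner M (\<lambda>w. c * Y w) W = c * rad_inner M Y W"
    unfolding rad_inner_def rad_expect_cmult[symmetric] by (simp add: mult.assoc)
  show "(\<lambda>w. snd w $ i) \<in> rad_L2 M"
    by (rule rad_L2I[where F = "\<lambda>u _. (u $ i)\<^sup>2"]) auto
  show "rad_inner M (\<lambda>w. snd w $ i) (\<lambda>w. snd w $ k) = (if i = k then 1 else 0)"
    unfolding rad_inner_def by (simp add: prob_space rad_expect_nth_mult_nth)
  show "w \<in> space M \<times> rad_vecs \<Longrightarrow> \<bar>snd w $ i\<bar> = 1" for w
    by (auto simp: abs_rad_vec_nth)
  assume Y: "Y \<in> rad_L2 M"
  show "(\<lambda>w. c * Y w) \<in> rad_L2 M"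
    using rad_L2D[OF Y] by (intro rad_L2I[where F = "\<lambda>u \<xi>. c\<^sup>2 * (Y (\<xi>, u))\<^sup>2"]) (auto simp: power_mult_distrib)
  show "(\<lambda>w. \<bar>Y w\<bar>) \<in> rad_L2 M"
    using rad_L2D[OF Y] by (intro rad_L2I[where F = "\<lambda>u \<xi>. (Y (\<xi>, u))\<^sup>2"]) auto
  show "(\<lambda>w. snd w $ i * Y w) \<in> rad_L2 M"
    using rad_L2D[OF Y]
    by (intro rad_L2I[where F = "\<lambda>u \<xi>. (Y (\<xi>, u))\<^sup>2"]) (auto simp: power_mult_distrib power2_rad_vec_nth)
  assume Z: "Z \<in> rad_L2 M"
  show "(\<lambda>w. Y w + Z w) \<in> rad_L2 M"
  proof (rule rad_L2I[where F = "\<lambda>u \<xi>. 2 * (Y (\<xi>, u))\<^sup>2 + 2 * (Z (\<xi>, u))\<^sup>2"])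
    show "(Y (\<xi>, u) + Z (\<xi>, u))\<^sup>2 \<le> 2 * (Y (\<xi>, u))\<^sup>2 + 2 * (Z (\<xi>, u))\<^sup>2" for \<xi> u
      using zero_le_power2[of "Y (\<xi>, u) - Z (\<xi>, u)"] by (simp add: power2_eq_square algebra_simps)
  qed (use rad_L2D[OF Y] rad_L2D[OF Z] in auto)
  show "rad_inner M (\<lambda>w. Y w + Z w) W = rad_inner M Y W + rad_inner M Z W" if "W \<in> rad_L2 M"
    unfolding rad_inner_def rad_expect_add[symmetric]
    by (intro rad_expect_cong) (simp add: distrib_right integrable_rad_L2_mult Y Z that)
  show "rad_inner M Y Y \<le> rad_inner M Z Z" if "\<And>w. w \<in> space M \<times> rad_vecs \<Longrightarrow> \<bar>Y w\<bar> \<le> \<bar>Z w\<bar>"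
    unfolding rad_inner_def using that
    by (intro rad_expect_mono integral_mono integrable_rad_L2_mult Y Z)
      (auto simp flip: power2_eq_square abs_le_square_iff)
qed simp_all

lemma rad_expect_integral:
  assumes "\<And>u. u \<in> rad_vecs \<Longrightarrow> integrable M (\<lambda>\<xi>. h \<xi> u)"
  shows "integrable M (\<lambda>\<xi>. rad_expect (h \<xi> :: real ^ 'd \<Rightarrow> real))"
    and "(\<integral>\<xi>. rad_expect (h \<xi>) \<partial>M) = rad_expect (\<lambda>u. \<integral>\<xi>. h \<xi> u \<partial>M)"
  using assms unfolding rad_expect_eq_average by (auto simp: integral_sum)

lemma nn_integral_rad_expect_sq:
  assumes "Y \<in> rad_L2 M"
  shows "(\<integral>\<^sup>+\<xi>. ennreal (rad_expect (\<lambda>u. (Y (\<xi>, u))\<^sup>2)) \<partial>M) = ennreal (rad_inner M Y Y)"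
proof -
  have "(\<integral>\<^sup>+\<xi>. ennreal (rad_expect (\<lambda>u. (Y (\<xi>, u))\<^sup>2)) \<partial>M)
      = ennreal (\<integral>\<xi>. rad_expect (\<lambda>u. (Y (\<xi>, u))\<^sup>2) \<partial>M)"
    using rad_L2D(2)[OF assms]
    by (intro nn_integral_eq_integral rad_expect_integral(1) AE_I2 rad_expect_nonneg) auto
  also have "(\<integral>\<xi>. rad_expect (\<lambda>u. (Y (\<xi>, u))\<^sup>2) \<partial>M) = rad_inner M Y Y"
    using rad_expect_integral(2)[OF rad_L2D(2)[OF assms]] unfolding rad_inner_def
    by (simp add: power2_eq_square)
  finally show ?thesis .
qed

section \<open>The zeroth-order gradient estimator\<close>

lemma (in prob_space) integral_norm_sq_le_mean_add_variance:
  fixes Y :: "'a \<Rightarrow> 'v::euclidean_space"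
  assumes "integrable M Y" "(\<integral>\<xi>. Y \<xi> \<partial>M) = b"
    and "(\<integral>\<^sup>+\<xi>. ennreal ((norm (b - Y \<xi>))\<^sup>2) \<partial>M) \<le> ennreal (\<sigma>\<^sup>2)"
  shows "integrable M (\<lambda>\<xi>. (norm (Y \<xi>))\<^sup>2)" and "(\<integral>\<xi>. (norm (Y \<xi>))\<^sup>2 \<partial>M) \<le> (norm b)\<^sup>2 + \<sigma>\<^sup>2"
proof -
  have Y_meas: "Y \<in> borel_measurable M"
    using assms(1) by (rule borel_measurable_integrable)
  have var_int: "integrable M (\<lambda>\<xi>. (norm (b - Y \<xi>))\<^sup>2)"
    using assms(3) Y_meas
    by (intro integrableI_nonneg) (auto simp: top.not_eq_extremum intro: le_less_trans)
  have "ennreal (\<integral>\<xi>. (norm (b - Y \<xi>))\<^sup>2 \<partial>M) \<le> ennreal (\<sigma>\<^sup>2)"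
    using assms(3) nn_integral_eq_integral[OF var_int] by simp
  then have var_le: "(\<integral>\<xi>. (norm (b - Y \<xi>))\<^sup>2 \<partial>M) \<le> \<sigma>\<^sup>2"
    by (simp add: ennreal_le_iff)
  have expand: "(norm (Y \<xi>))\<^sup>2 = (norm b)\<^sup>2 - 2 * (b \<bullet> (b - Y \<xi>)) + (norm (b - Y \<xi>))\<^sup>2" for \<xi>
    by (simp add: power2_norm_eq_inner inner_diff_left inner_diff_right inner_commute)
  have cross_int: "integrable M (\<lambda>\<xi>. b \<bullet> (b - Y \<xi>))"
    using assms(1) by simp
  have "(\<integral>\<xi>. b \<bullet> (b - Y \<xi>) \<partial>M) = 0"
    using assms(1,2) by (simp add: prob_space)
  then show "integrable M (\<lambda>\<xi>. (norm (Y \<xi>))\<^sup>2)" and "(\<integral>\<xi>. (norm (Y \<xi>))\<^sup>2 \<partial>M) \<le> (norm b)\<^sup>2 + \<sigma>\<^sup>2"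
    unfolding expand using cross_int var_int var_le by (simp_all add: prob_space)
qed

lemma inner_rad_L2:
  fixes G :: "'b \<Rightarrow> real ^ 'd"
  assumes "prob_space M" "G \<in> borel_measurable M" "integrable M (\<lambda>\<xi>. (norm (G \<xi>))\<^sup>2)"
  shows "(\<lambda>w. G (fst w) \<bullet> snd w) \<in> rad_L2 M"
    and "rad_inner M (\<lambda>w. G (fst w) \<bullet> snd w) (\<lambda>w. G (fst w) \<bullet> snd w) = (\<integral>\<xi>. (norm (G \<xi>))\<^sup>2 \<partial>M)"
proof -
  have bound: "(G \<xi> \<bullet> u)\<^sup>2 \<le> real CARD('d) * (norm (G \<xi>))\<^sup>2" if "u \<in> rad_vecs" for \<xi> u
  proof -
    have "(G \<xi> \<bullet> u)\<^sup>2 \<le> (norm (G \<xi>) * norm u)\<^sup>2"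
      using Cauchy_Schwarz_ineq2[of "G \<xi>" u] by (simp add: power2_le_iff_abs_le)
    then show ?thesis
      using norm_rad_vec_sq[OF that] by (simp add: power_mult_distrib mult.commute)
  qed
  show mem: "(\<lambda>w. G (fst w) \<bullet> snd w) \<in> rad_L2 M"
    using assms(2,3) bound by (intro rad_L2I[where F = "\<lambda>_ \<xi>. real CARD('d) * (norm (G \<xi>))\<^sup>2"]) auto
  have "rad_inner M (\<lambda>w. G (fst w) \<bullet> snd w) (\<lambda>w. G (fst w) \<bullet> snd w)
      = rad_expect (\<lambda>u. \<integral>\<xi>. (G \<xi> \<bullet> u)\<^sup>2 \<partial>M)"
    unfolding rad_inner_def by (simp add: power2_eq_square)
  also have "\<dots> = (\<integral>\<xi>. rad_expect (\<lambda>u. (G \<xi> \<bullet> u)\<^sup>2) \<partial>M)"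
    using rad_L2D(2)[OF mem] by (intro rad_expect_integral(2)[symmetric]) simp
  finally show "rad_inner M (\<lambda>w. G (fst w) \<bullet> snd w) (\<lambda>w. G (fst w) \<bullet> snd w) = (\<integral>\<xi>. (norm (G \<xi>))\<^sup>2 \<partial>M)"
    by (simp add: rad_expect_inner_sq)
qed

lemma power2_le_of_abs_diff_le:
  fixes p q K t :: real
  assumes "\<bar>p - q\<bar> \<le> K" "0 < t"
  shows "p\<^sup>2 \<le> (1 + t) * q\<^sup>2 + (1 + 1 / t) * K\<^sup>2"
proof -
  have "p\<^sup>2 = q\<^sup>2 + 2 * q * (p - q) + (p - q)\<^sup>2"
    by (simp add: power2_eq_square algebra_simps)
  also have "\<dots> \<le> q\<^sup>2 + (t * q\<^sup>2 + (p - q)\<^sup>2 / t) + (p - q)\<^sup>2"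
    using zero_le_power2[of "t * q - (p - q)"] assms(2) by (simp add: field_simps power2_eq_square)
  also have "\<dots> = (1 + t) * q\<^sup>2 + (1 + 1 / t) * (p - q)\<^sup>2"
    by (simp add: algebra_simps)
  also have "\<dots> \<le> (1 + t) * q\<^sup>2 + (1 + 1 / t) * K\<^sup>2"
    using assms abs_ge_zero[of "p - q"] by (intro add_left_mono mult_left_mono) (auto simp: power2_le_iff_abs_le)
  finally show ?thesis .
qed

lemma difference_quotient_sq_le:
  fixes g :: "'a::real_inner \<Rightarrow> real"
  assumes "\<And>z. GDERIV g z :> G z" "\<And>y z. norm (G y - G z) \<le> L * norm (y - z)" "0 < \<nu>"
  shows "((g (x + \<nu> *\<^sub>R u) - g x) / \<nu>)\<^sup>2 \<le> 30/13 * (G x \<bullet> u)\<^sup>2 + 30/17 * (L / 2 * \<nu> * (norm u)\<^sup>2)\<^sup>2"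
proof -
  have "\<bar>g (x + \<nu> *\<^sub>R u) - g x - G x \<bullet> (\<nu> *\<^sub>R u)\<bar> \<le> L / 2 * (norm (\<nu> *\<^sub>R u))\<^sup>2"
    by (rule lipschitz_gradient_taylor_bound[OF assms(1,2)])
  then have "\<bar>(g (x + \<nu> *\<^sub>R u) - g x) / \<nu> - G x \<bullet> u\<bar> * \<nu> \<le> (L / 2 * \<nu> * (norm u)\<^sup>2) * \<nu>"
    using assms(3) by (simp add: power_mult_distrib power2_eq_square field_simps abs_mult_pos)
  then have "\<bar>(g (x + \<nu> *\<^sub>R u) - g x) / \<nu> - G x \<bullet> u\<bar> \<le> L / 2 * \<nu> * (norm u)\<^sup>2"
    using assms(3) by (simp add: mult_ac)
  \<comment> \<open>t = 17/13 gives 17/5 * (1 + t) < 8 and 17/5 * (1 + 1/t) = 6, as the final bound needs\<close>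
  from power2_le_of_abs_diff_le[OF this, of "17/13"]
  show ?thesis
    by simp
qed

lemma difference_quotient_rad_L2:
  fixes f :: "real ^ 'd \<Rightarrow> 'b \<Rightarrow> real" and gf :: "'b \<Rightarrow> real ^ 'd \<Rightarrow> real ^ 'd"
  assumes prob: "prob_space M"
    and f_meas: "\<And>y. f y \<in> borel_measurable M"
    and grad_f: "\<And>\<xi> y. \<xi> \<in> space M \<Longrightarrow> GDERIV (\<lambda>z. f z \<xi>) y :> gf \<xi> y"
    and lip: "\<And>\<xi> y z. \<xi> \<in> space M \<Longrightarrow> norm (gf \<xi> y - gf \<xi> z) \<le> L * norm (y - z)"
    and gf_int: "integrable M (\<lambda>\<xi>. gf \<xi> x)"
    and mean: "(\<integral>\<xi>. gf \<xi> x \<partial>M) = b"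
    and var: "(\<integral>\<^sup>+\<xi>. ennreal ((norm (b - gf \<xi> x))\<^sup>2) \<partial>M) \<le> ennreal (\<sigma>\<^sup>2)"
    and "0 < \<nu>"
  defines "X \<equiv> \<lambda>w. (f (x + \<nu> *\<^sub>R snd w) (fst w) - f x (fst w)) / \<nu>"
  shows "X \<in> rad_L2 M"
    and "rad_inner M X X \<le> 30/13 * ((norm b)\<^sup>2 + \<sigma>\<^sup>2) + 30/17 * (L / 2 * \<nu> * real CARD('d))\<^sup>2"
proof -
  interpret prob_space M
    by (rule prob)
  define A where "A = (\<lambda>w. gf (fst w) x \<bullet> snd w)"
  define K where "K = L / 2 * \<nu> * real CARD('d)"
  have gf_sq: "integrable M (\<lambda>\<xi>. (norm (gf \<xi> x))\<^sup>2)" "(\<integral>\<xi>. (norm (gf \<xi> x))\<^sup>2 \<partial>M) \<le> (norm b)\<^sup>2 + \<sigma>\<^sup>2"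
    using integral_norm_sq_le_mean_add_variance[OF gf_int mean var] by auto
  have A: "A \<in> rad_L2 M" "rad_inner M A A = (\<integral>\<xi>. (norm (gf \<xi> x))\<^sup>2 \<partial>M)"
    unfolding A_def using inner_rad_L2[OF prob borel_measurable_integrable[OF gf_int] gf_sq(1)] by auto
  have X_le: "(X (\<xi>, u))\<^sup>2 \<le> 30/13 * (A (\<xi>, u))\<^sup>2 + 30/17 * K\<^sup>2" if "\<xi> \<in> space M" "u \<in> rad_vecs" for \<xi> u
    using difference_quotient_sq_le[of "\<lambda>z. f z \<xi>" "gf \<xi>" L \<nu> x u] grad_f lip that \<open>0 < \<nu>\<close>
    unfolding X_def A_def K_def by (simp add: norm_rad_vec_sq)
  have int_bound: "integrable M (\<lambda>\<xi>. 30/13 * (A (\<xi>, u))\<^sup>2 + 30/17 * K\<^sup>2)" if "u \<in> rad_vecs" for u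
    using rad_L2D(2)[OF A(1) that] by simp
  show X: "X \<in> rad_L2 M"
    by (rule rad_L2I[OF _ int_bound X_le]) (auto simp: X_def intro!: borel_measurable_divide borel_measurable_diff f_meas)
  have "rad_inner M X X \<le> rad_expect (\<lambda>u. \<integral>\<xi>. 30/13 * (A (\<xi>, u))\<^sup>2 + 30/17 * K\<^sup>2 \<partial>M)"
    unfolding rad_inner_def using X_le int_bound integrable_rad_L2_mult[OF X X]
    by (intro rad_expect_mono integral_mono) (auto simp flip: power2_eq_square)
  also have "\<dots> = rad_expect (\<lambda>u. 30/13 * (\<integral>\<xi>. A (\<xi>, u) * A (\<xi>, u) \<partial>M) + 30/17 * K\<^sup>2)"
    using rad_L2D(2)[OF A(1)] by (intro rad_expect_cong) (simp add: prob_space power2_eq_square)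
  also have "\<dots> = 30/13 * rad_inner M A A + 30/17 * K\<^sup>2"
    unfolding rad_inner_def by (simp only: rad_expect_add rad_expect_cmult rad_expect_const)
  also have "\<dots> \<le> 30/13 * ((norm b)\<^sup>2 + \<sigma>\<^sup>2) + 30/17 * K\<^sup>2"
    using A(2) gf_sq(2) by simp
  finally show "rad_inner M X X \<le> 30/13 * ((norm b)\<^sup>2 + \<sigma>\<^sup>2) + 30/17 * (L / 2 * \<nu> * real CARD('d))\<^sup>2"
    unfolding K_def .
qed

lemma linf_norm_eq_max_deviation:
  fixes X :: "'b \<times> (real ^ 'd) \<Rightarrow> real" and c :: "real ^ 'd"
  assumes "\<And>i. c $ i = ip (\<lambda>w. snd w $ i) X"
  shows "linf_norm (X (\<xi>, u) *\<^sub>R u - c) = max_deviation ip (\<lambda>i w. snd w $ i) UNIV X (\<xi>, u)"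
  unfolding linf_norm_def max_deviation_def using assms by (simp add: mult.commute)

theorem lemma3:
  fixes M :: "'b measure"
    and f :: "real ^ 'd \<Rightarrow> 'b \<Rightarrow> real"
    and gf :: "'b \<Rightarrow> real ^ 'd \<Rightarrow> real ^ 'd"
    and F :: "real ^ 'd \<Rightarrow> real"
    and gF :: "real ^ 'd \<Rightarrow> real ^ 'd"
    and K :: "(real ^ 'd) set"
    and L \<sigma> \<nu> :: real
    and x :: "real ^ 'd"
  assumes prob: "prob_space M"
    and f_int: "\<And>y. integrable M (f y)"
    and F_def: "\<And>y. F y = (\<integral>\<xi>. f y \<xi> \<partial>M)"
    and grad_f: "\<And>\<xi> y. \<xi> \<in> space M \<Longrightarrow> GDERIV (\<lambda>z. f z \<xi>) y :> gf \<xi> y"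
    and lip: "\<And>\<xi> y z. \<xi> \<in> space M \<Longrightarrow> norm (gf \<xi> y - gf \<xi> z) \<le> L * norm (y - z)"
    and gf_int: "\<And>y. integrable M (\<lambda>\<xi>. gf \<xi> y)"
    and grad_F: "\<And>y. GDERIV F y :> gF y"
    and unbiased: "\<And>y. (\<integral>\<xi>. gf \<xi> y \<partial>M) = gF y"
    and var: "\<And>y. y \<in> K \<Longrightarrow> (\<integral>\<^sup>+\<xi>. ennreal ((norm (gF y - gf \<xi> y))\<^sup>2) \<partial>M) \<le> ennreal (\<sigma>\<^sup>2)"
    and nu: "\<nu> > 0"
    and xK: "x \<in> K"
  shows "(\<integral>\<^sup>+\<xi>. ennreal (rad_expect (\<lambda>u.
            (linf_norm ((1 / \<nu>) *\<^sub>R ((f (x + \<nu> *\<^sub>R u) \<xi> - f x \<xi>) *\<^sub>R u)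
               - rad_expect (\<lambda>v. (1 / \<nu>) *\<^sub>R ((F (x + \<nu> *\<^sub>R v) - F x) *\<^sub>R v))))\<^sup>2)) \<partial>M)
         \<le> ennreal (3 * \<nu>\<^sup>2 * (real CARD('d))\<^sup>2 * L\<^sup>2 / 2 + 10 * (norm (gF x))\<^sup>2 + 8 * \<sigma>\<^sup>2)"
proof -
  interpret prob_space M
    by (rule prob)
  interpret unimodular_orthonormal_system "rad_L2 M" "space M \<times> rad_vecs" "rad_inner M"
      "\<lambda>i w. snd w $ i" UNIV
    by (rule unimodular_orthonormal_system_rad_L2[OF prob])
  define X where "X = (\<lambda>w. (f (x + \<nu> *\<^sub>R snd w) (fst w) - f x (fst w)) / \<nu>)"
  have X: "X \<in> rad_L2 M"
    "rad_inner M X X \<le> 30/13 * ((norm (gF x))\<^sup>2 + \<sigma>\<^sup>2) + 30/17 * (L / 2 * \<nu> * real CARD('d))\<^sup>2"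
    unfolding X_def using difference_quotient_rad_L2[OF prob borel_measurable_integrable[OF f_int]
        grad_f lip gf_int unbiased var[OF xK] nu] by auto
  have "rad_expect (\<lambda>v. (1 / \<nu>) *\<^sub>R ((F (x + \<nu> *\<^sub>R v) - F x) *\<^sub>R v)) $ i = rad_inner M (\<lambda>w. snd w $ i) X"
    for i
    unfolding rad_expect_nth rad_inner_def X_def
    using nu by (intro rad_expect_cong) (simp add: F_def f_int field_simps)
  then have integrand: "linf_norm ((1 / \<nu>) *\<^sub>R ((f (x + \<nu> *\<^sub>R u) \<xi> - f x \<xi>) *\<^sub>R u)
      - rad_expect (\<lambda>v. (1 / \<nu>) *\<^sub>R ((F (x + \<nu> *\<^sub>R v) - F x) *\<^sub>R v))) = dev X (\<xi>, u)" for \<xi> u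
    using linf_norm_eq_max_deviation[of _ "rad_inner M" X \<xi> u] by (simp add: X_def)
  have "6 * (L / 2 * \<nu> * real CARD('d))\<^sup>2 = 3 * \<nu>\<^sup>2 * (real CARD('d))\<^sup>2 * L\<^sup>2 / 2"
    by (simp add: power_mult_distrib power_divide)
  then have "17/5 * rad_inner M X X \<le> 3 * \<nu>\<^sup>2 * (real CARD('d))\<^sup>2 * L\<^sup>2 / 2 + 10 * (norm (gF x))\<^sup>2 + 8 * \<sigma>\<^sup>2"
    using X(2) zero_le_power2[of "norm (gF x)"] zero_le_power2[of \<sigma>] unfolding distrib_left by linarith
  then show ?thesis
    unfolding integrand nn_integral_rad_expect_sq[OF dev_mem[OF X(1)]]
    using ip_dev_le[OF X(1)] by (intro ennreal_leI) linarith
qed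

end
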